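(* In $\mathbb{R}^3$, for $r>0$ let $C_r=[0,\tfrac14]\times D_r$, where $D_r\subset\mathbb{R}^2$ is the disc of radius $r$ centred at $0$ (writing $z=(z_1,\mathbf z_2)$, $\mathbf z_2\in\mathbb{R}^2$). For $r\in(0,e^{-1})$ put $\varrho(r)=\frac{1}{r^2|\ln r|\ln|\ln r|}$ and $U_r(z)=\varrho(r)\mathbf 1_{C_r}(z)$. Then $$\lim_{\varepsilon\to0^+}\ \sup_{x\in\mathbb{R}^3,\ r\in(0,1/5)}\int_{|z-x|<\varepsilon}\frac{|U_r(z)|}{|z-x|}\,dz=0.$$ *)

theory Defs
  imports "HOL-Analysis.Analysis"
begin

text \<open>Points of R^3 are vectors z :: real^3 with components z$1 (the axial coordinate z_1)
and (z$2, z$3) (the planar coordinate \<zz>_2).\<close>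

definition cyl :: "real \<Rightarrow> (real^3) set" where
  "cyl r = {z. 0 \<le> z$1 \<and> z$1 \<le> 1/4 \<and> (z$2)\<^sup>2 + (z$3)\<^sup>2 \<le> r\<^sup>2}"

definition varrho :: "real \<Rightarrow> real" where
  "varrho r = 1 / (r\<^sup>2 * \<bar>ln r\<bar> * ln \<bar>ln r\<bar>)"

definition U :: "real \<Rightarrow> real^3 \<Rightarrow> real" where
  "U r z = varrho r * indicator (cyl r) z"

end

theory Submission
  imports Defs "HOL-Real_Asymp.Real_Asymp"
begin

(* Split the ball |z - x| < eps into the dyadic shells eps/2^(k+1) < |z - x| <= eps/2^k.
   On the k-th shell the kernel 1/|z - x| is at most 2^(k+1)/eps, and the shell meets the
   cylinder C_r in a set of volume at most 8 (eps/2^k) min(eps/2^k, r)^2. So the integral is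
   at most 16 rho(r) sum_k min(eps/2^k, r)^2.
   If r >= eps the sum is at most (4/3) eps^2, and against rho(r) = 1/(r^2 |ln r| ln|ln r|)
   this gives O(1/|ln eps| + eps).
   If r < eps only about log2(eps/r) <= |ln r| terms have size r^2, the rest form a geometric
   tail, and this gives O(1/ln|ln eps|). Both bounds are uniform in x and r. *)

lemma sets_borel_cyl [measurable]: "cyl r \<in> sets borel"
  unfolding cyl_def by measurable

lemma emeasure_lborel_cbox_centred_3:
  fixes c w :: "real^3"
  assumes "\<And>i. 0 \<le> w$i"
  shows "emeasure lborel (cbox (c - w) (c + w)) = ennreal (8 * (w$1 * w$2 * w$3))"
proof -
  have "cbox (c - w) (c + w) \<noteq> {}"
    using assms by (simp add: interval_ne_empty_cart)
  then have "measure lborel (cbox (c - w) (c + w)) = (\<Prod>i\<in>UNIV. (c + w)$i - (c - w)$i)"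
    by (rule content_cbox_cart)
  also have "\<dots> = 8 * (w$1 * w$2 * w$3)"
    unfolding UNIV_3 by simp
  finally show ?thesis
    using emeasure_lborel_cbox_finite[of "c - w" "c + w"]
    by (simp add: emeasure_eq_ennreal_measure)
qed

lemma emeasure_cball_Int_cyl_le:
  fixes x :: "real^3"
  assumes "0 < \<rho>" "0 \<le> r"
  shows "emeasure lborel (cball x \<rho> \<inter> cyl r) \<le> ennreal (8 * \<rho> * (min \<rho> r)\<^sup>2)"
proof -
  \<comment> \<open>Centre the transversal sides at x if the ball is the thinner constraint, at the axis otherwise.\<close>
  define c :: "real^3" where "c = (\<chi> i. if i = 1 \<or> \<rho> \<le> r then x$i else 0)"
  define w :: "real^3" where "w = (\<chi> i. if i = 1 then \<rho> else min \<rho> r)"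
  have "cball x \<rho> \<inter> cyl r \<subseteq> cbox (c - w) (c + w)"
  proof
    fix z assume z: "z \<in> cball x \<rho> \<inter> cyl r"
    have near: "\<bar>x$i - z$i\<bar> \<le> \<rho>" for i
      using z component_le_norm_cart[of "x - z" i] by (auto simp: dist_norm)
    have "(z$i)\<^sup>2 \<le> r\<^sup>2" if "i \<noteq> 1" for i
    proof -
      have "(z$2)\<^sup>2 + (z$3)\<^sup>2 \<le> r\<^sup>2" using z by (simp add: cyl_def)
      then show ?thesis using that exhaust_3[of i] by (auto intro: order_trans[rotated])
    qed
    then have axis: "\<bar>z$i\<bar> \<le> r" if "i \<noteq> 1" for i
      using that assms(2) by (simp add: power2_le_iff_abs_le)
    show "z \<in> cbox (c - w) (c + w)"
      unfolding mem_box_cart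
    proof
      fix i
      show "(c - w)$i \<le> z$i \<and> z$i \<le> (c + w)$i"
        using near[of i] axis[of i] by (cases "i = 1") (auto simp: c_def w_def abs_le_iff min_def)
    qed
  qed
  then have "emeasure lborel (cball x \<rho> \<inter> cyl r) \<le> emeasure lborel (cbox (c - w) (c + w))"
    by (intro emeasure_mono) auto
  also have "\<dots> = ennreal (8 * (\<rho> * min \<rho> r * min \<rho> r))"
    using assms by (subst emeasure_lborel_cbox_centred_3) (simp_all add: w_def)
  finally show ?thesis
    by (simp add: power2_eq_square mult_ac)
qed

lemma ex_dyadic_shell:
  fixes d \<epsilon> :: real
  assumes "0 < d" "d < \<epsilon>"
  shows "\<exists>k::nat. \<epsilon>/2^(k+1) < d \<and> d \<le> \<epsilon>/2^k"
proof -
  define k where "k = nat \<lfloor>log 2 (\<epsilon>/d)\<rfloor>"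
  have lg: "0 < log 2 (\<epsilon>/d)" using assms by simp
  have "2^k = 2 powr (real k)" by (simp add: powr_realpow)
  also have "\<dots> \<le> 2 powr (log 2 (\<epsilon>/d))" unfolding k_def using lg by simp
  also have "\<dots> = \<epsilon>/d" using assms by simp
  finally have lower: "2^k \<le> \<epsilon>/d" .
  have "\<epsilon>/d = 2 powr (log 2 (\<epsilon>/d))" using assms by simp
  also have "\<dots> < 2 powr (real (k+1))" unfolding k_def using lg by simp linarith
  also have "\<dots> = 2^(k+1)" by (rule powr_realpow) simp
  finally have upper: "\<epsilon>/d < 2^(k+1)" .
  show ?thesis
    using lower upper assms by (intro exI[of _ k]) (simp add: field_simps)
qed

lemma ball_kernel_le_dyadic_sum:
  fixes x z :: "'a::real_normed_vector"
  assumes "0 \<le> c"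
  shows "ennreal (indicator (ball x \<epsilon>) z * (c * indicator S z) / norm (z - x))
    \<le> (\<Sum>k. ennreal (2 * c / (\<epsilon>/2^k)) * indicator (cball x (\<epsilon>/2^k) \<inter> S) z)"
proof (cases "z \<in> ball x \<epsilon> \<and> z \<in> S \<and> z \<noteq> x")
  case False
  then have "indicator (ball x \<epsilon>) z * (c * indicator S z) / norm (z - x) = 0"
    by auto
  then show ?thesis by (metis ennreal_0 zero_le)
next
  case True
  define d where "d = norm (z - x)"
  have d: "0 < d" "d < \<epsilon>"
    using True by (auto simp: d_def dist_norm norm_minus_commute)
  then obtain k where k: "\<epsilon>/2^(k+1) < d" "d \<le> \<epsilon>/2^k"
    using ex_dyadic_shell by blast
  have "indicator (ball x \<epsilon>) z * (c * indicator S z) / norm (z - x) = c / d"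
    using True by (simp add: d_def)
  also have "\<dots> \<le> 2 * c / (\<epsilon>/2^k)"
  proof -
    have "\<epsilon> \<le> d * (2 * 2^k)"
      using d k by (simp add: field_simps)
    then have "c * \<epsilon> \<le> c * (d * (2 * 2^k))"
      using assms by (rule mult_left_mono)
    then show ?thesis
      using d by (simp add: field_simps)
  qed
  finally have "ennreal (indicator (ball x \<epsilon>) z * (c * indicator S z) / norm (z - x))
      \<le> ennreal (2 * c / (\<epsilon>/2^k)) * indicator (cball x (\<epsilon>/2^k) \<inter> S) z"
    using True k by (auto simp: d_def dist_norm norm_minus_commute intro: ennreal_leI)
  also have "\<dots> \<le> (\<Sum>k. ennreal (2 * c / (\<epsilon>/2^k)) * indicator (cball x (\<epsilon>/2^k) \<inter> S) z)"
  proof -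
    have "(f::nat \<Rightarrow> ennreal) k \<le> suminf f" for f
      using sum_le_suminf[of f "{k}"] by (simp add: summableI)
    then show ?thesis .
  qed
  finally show ?thesis .
qed

lemma min_dyadic_sq_le_geometric:
  fixes \<epsilon> r :: real
  assumes "0 \<le> \<epsilon>" "0 \<le> r"
  shows "(min (\<epsilon>/2^k) r)\<^sup>2 \<le> \<epsilon>\<^sup>2 * (1/4)^k"
proof -
  have "(min (\<epsilon>/2^k) r)\<^sup>2 \<le> (\<epsilon>/2^k)\<^sup>2"
    using assms by (intro power_mono) auto
  also have "\<dots> = \<epsilon>\<^sup>2 * (1/4)^k"
  proof -
    have "(2::real)^k * 2^k = 4^k" by (simp flip: power_mult_distrib)
    then show ?thesis by (simp add: power2_eq_square power_one_over)
  qed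
  finally show ?thesis .
qed

lemma summable_min_dyadic_sq:
  fixes \<epsilon> r :: real
  assumes "0 \<le> \<epsilon>" "0 \<le> r"
  shows "summable (\<lambda>k. (min (\<epsilon>/2^k) r)\<^sup>2)"
  by (rule summable_comparison_test[OF _ summable_mult[OF summable_geometric]])
    (use min_dyadic_sq_le_geometric[OF assms] in auto)

lemma suminf_min_dyadic_sq_le:
  fixes \<epsilon> r :: real
  assumes "0 \<le> \<epsilon>" "0 \<le> r"
  shows "(\<Sum>k. (min (\<epsilon>/2^k) r)\<^sup>2) \<le> 4/3 * \<epsilon>\<^sup>2"
proof -
  have geo: "(\<lambda>k. \<epsilon>\<^sup>2 * (1/4)^k) sums (\<epsilon>\<^sup>2 * (4/3))"
    using sums_mult[OF geometric_sums[of "1/4::real"], of "\<epsilon>\<^sup>2"] by simp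
  have "(\<Sum>k. (min (\<epsilon>/2^k) r)\<^sup>2) \<le> (\<Sum>k. \<epsilon>\<^sup>2 * (1/4)^k)"
    using min_dyadic_sq_le_geometric[OF assms] summable_min_dyadic_sq[OF assms] geo
    by (intro suminf_le) (auto simp: sums_summable)
  then show ?thesis
    using sums_unique[OF geo] by simp
qed

lemma suminf_min_dyadic_sq_le_log:
  fixes \<epsilon> r :: real
  assumes "0 < r" "r < \<epsilon>"
  shows "(\<Sum>k. (min (\<epsilon>/2^k) r)\<^sup>2) \<le> (log 2 (\<epsilon>/r) + 7/3) * r\<^sup>2"
proof -
  define N where "N = nat \<lceil>log 2 (\<epsilon>/r)\<rceil>"
  have lg: "0 < log 2 (\<epsilon>/r)" using assms by simp
  have "\<epsilon>/r = 2 powr (log 2 (\<epsilon>/r))" using assms by simp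
  also have "\<dots> \<le> 2 powr (real N)" unfolding N_def using lg by simp
  also have "\<dots> = 2^N" by (simp add: powr_realpow)
  finally have "\<epsilon>/2^N \<le> r" using assms by (simp add: field_simps)
  have "(\<Sum>k. (min (\<epsilon>/2^k) r)\<^sup>2) = (\<Sum>j. (min ((\<epsilon>/2^N)/2^j) r)\<^sup>2) + (\<Sum>k<N. (min (\<epsilon>/2^k) r)\<^sup>2)"
    using suminf_split_initial_segment[OF summable_min_dyadic_sq, of \<epsilon> r N] assms
    by (simp add: power_add mult.commute divide_divide_eq_left)
  also have "(\<Sum>j. (min ((\<epsilon>/2^N)/2^j) r)\<^sup>2) \<le> 4/3 * (\<epsilon>/2^N)\<^sup>2"
    using assms by (intro suminf_min_dyadic_sq_le) auto
  also have "\<dots> \<le> 4/3 * r\<^sup>2"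
    using \<open>\<epsilon>/2^N \<le> r\<close> assms by (intro mult_left_mono power_mono) auto
  also have "(\<Sum>k<N. (min (\<epsilon>/2^k) r)\<^sup>2) \<le> (\<Sum>k<N. r\<^sup>2)"
    using assms by (intro sum_mono power_mono) auto
  also have "\<dots> \<le> (log 2 (\<epsilon>/r) + 1) * r\<^sup>2"
    unfolding N_def using lg by (simp add: mult_right_mono)
  finally show ?thesis by (simp add: algebra_simps)
qed

lemma nn_integral_ball_cyl_le:
  fixes x :: "real^3"
  assumes "0 \<le> c" "0 < r" "0 < \<epsilon>"
  shows "(\<integral>\<^sup>+ z. ennreal (indicator (ball x \<epsilon>) z * (c * indicator (cyl r) z) / norm (z - x)) \<partial>lborel)
    \<le> ennreal (16 * c * (\<Sum>k. (min (\<epsilon>/2^k) r)\<^sup>2))"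
proof -
  define f where "f k z = ennreal (2 * c / (\<epsilon>/2^k)) * indicator (cball x (\<epsilon>/2^k) \<inter> cyl r) z" for k z
  have "(\<integral>\<^sup>+ z. ennreal (indicator (ball x \<epsilon>) z * (c * indicator (cyl r) z) / norm (z - x)) \<partial>lborel)
      \<le> (\<integral>\<^sup>+ z. (\<Sum>k. f k z) \<partial>lborel)"
    unfolding f_def using assms(1) by (intro nn_integral_mono ball_kernel_le_dyadic_sum)
  also have "\<dots> = (\<Sum>k. integral\<^sup>N lborel (f k))"
    unfolding f_def
    by (intro nn_integral_suminf borel_measurable_times_ennreal borel_measurable_const
        borel_measurable_indicator) (simp add: sets.Int)
  also have "\<dots> \<le> (\<Sum>k. ennreal (16 * c * (min (\<epsilon>/2^k) r)\<^sup>2))"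
  proof (intro suminf_le)
    fix k
    have \<rho>: "0 < \<epsilon>/2^k" using assms by simp
    have "integral\<^sup>N lborel (f k) = ennreal (2 * c / (\<epsilon>/2^k)) * emeasure lborel (cball x (\<epsilon>/2^k) \<inter> cyl r)"
      unfolding f_def by (intro nn_integral_cmult_indicator) simp
    also have "\<dots> \<le> ennreal (2 * c / (\<epsilon>/2^k)) * ennreal (8 * (\<epsilon>/2^k) * (min (\<epsilon>/2^k) r)\<^sup>2)"
      using \<rho> assms by (intro mult_left_mono emeasure_cball_Int_cyl_le) auto
    also have "\<dots> = ennreal (16 * c * (min (\<epsilon>/2^k) r)\<^sup>2)"
      using \<rho> assms by (simp flip: ennreal_mult add: field_simps)
    finally show "integral\<^sup>N lborel (f k) \<le> ennreal (16 * c * (min (\<epsilon>/2^k) r)\<^sup>2)" .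
  qed (simp_all add: summableI)
  also have "\<dots> = ennreal (\<Sum>k. 16 * c * (min (\<epsilon>/2^k) r)\<^sup>2)"
    using assms summable_min_dyadic_sq[of \<epsilon> r] by (intro suminf_ennreal2 summable_mult) auto
  also have "(\<Sum>k. 16 * c * (min (\<epsilon>/2^k) r)\<^sup>2) = 16 * c * (\<Sum>k. (min (\<epsilon>/2^k) r)\<^sup>2)"
    using assms summable_min_dyadic_sq[of \<epsilon> r] by (intro suminf_mult) auto
  finally show ?thesis .
qed

lemma four_thirds_le_minus_ln:
  fixes r :: real
  assumes "0 < r" "r < 1/5"
  shows "4/3 \<le> - ln r"
proof -
  have "4/3 \<le> 2 * ln (2::real)" using ln2_ge_two_thirds by simp
  also have "\<dots> = ln 4" using ln_realpow[of 2 2] by simp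
  also have "\<dots> \<le> ln 5" by simp
  also have "\<dots> < - ln r"
  proof -
    have "ln r < ln (1/5)" using assms by simp
    then show ?thesis by (simp add: ln_div)
  qed
  finally show ?thesis by simp
qed

lemma quarter_le_ln_minus_ln:
  fixes r :: real
  assumes "0 < r" "r < 1/5"
  shows "1/4 \<le> ln (- ln r)"
proof -
  define y where "y = - ln r"
  have y: "4/3 \<le> y" unfolding y_def using four_thirds_le_minus_ln[OF assms] .
  have "ln (1/y) \<le> 1/y - 1" using y by (intro ln_le_minus_one) simp
  then have "1 - 1/y \<le> ln y" using y by (simp add: ln_div)
  moreover have "1/y \<le> 3/4" using y by (simp add: field_simps)
  ultimately show ?thesis unfolding y_def by simp
qed

lemma varrho_eq:
  fixes r :: real
  assumes "0 < r" "r < 1/5"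
  shows "varrho r = 1 / (r\<^sup>2 * (- ln r) * ln (- ln r))"
  using four_thirds_le_minus_ln[OF assms] by (simp add: varrho_def)

lemma varrho_pos:
  fixes r :: real
  assumes "0 < r" "r < 1/5"
  shows "0 < varrho r"
proof -
  have "0 < r\<^sup>2 * (- ln r) * ln (- ln r)"
    using assms four_thirds_le_minus_ln[OF assms] quarter_le_ln_minus_ln[OF assms]
    by (intro mult_pos_pos) auto
  then show ?thesis by (simp add: varrho_eq[OF assms])
qed

lemma varrho_dyadic_sum_le_thin:
  fixes \<epsilon> r :: real
  assumes "0 < r" "r < \<epsilon>" "\<epsilon> < 1/5"
  shows "16 * varrho r * (\<Sum>k. (min (\<epsilon>/2^k) r)\<^sup>2) \<le> 56 / ln (- ln \<epsilon>)"
proof -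
  define L where "L = - ln r"
  have r: "r < 1/5" using assms by simp
  have L: "4/3 \<le> L" "1/4 \<le> ln L"
    unfolding L_def using four_thirds_le_minus_ln[OF assms(1) r] quarter_le_ln_minus_ln[OF assms(1) r] .
  have "log 2 (\<epsilon>/r) = ln (\<epsilon>/r) / ln 2" by (simp add: log_def)
  also have "\<dots> \<le> ln (\<epsilon>/r) / (2/3)"
    using assms ln2_ge_two_thirds by (intro divide_left_mono) auto
  also have "\<dots> \<le> 3/2 * L"
    using assms by (simp add: ln_div L_def)
  finally have log_le: "log 2 (\<epsilon>/r) + 7/3 \<le> 7/2 * L" using L by linarith
  have "16 * varrho r * (\<Sum>k. (min (\<epsilon>/2^k) r)\<^sup>2) \<le> 16 * varrho r * ((log 2 (\<epsilon>/r) + 7/3) * r\<^sup>2)"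
    using varrho_pos[OF assms(1) r] suminf_min_dyadic_sq_le_log[OF assms(1,2)] by simp
  also have "\<dots> = 16 * (log 2 (\<epsilon>/r) + 7/3) / (L * ln L)"
    using assms(1) by (simp add: varrho_eq[OF assms(1) r] L_def)
  also have "\<dots> \<le> 16 * (7/2 * L) / (L * ln L)"
    using log_le L by (intro divide_right_mono mult_left_mono) auto
  also have "\<dots> = 56 / ln L" using L by simp
  also have "\<dots> \<le> 56 / ln (- ln \<epsilon>)"
  proof -
    have \<epsilon>: "0 < \<epsilon>" using assms by simp
    have "ln r \<le> ln \<epsilon>" using assms by simp
    then have "ln (- ln \<epsilon>) \<le> ln L"
      using four_thirds_le_minus_ln[OF \<epsilon> assms(3)] by (simp add: L_def)
    moreover have "0 < ln (- ln \<epsilon>)"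
      using quarter_le_ln_minus_ln[OF \<epsilon> assms(3)] by simp
    ultimately show ?thesis by (intro divide_left_mono) auto
  qed
  finally show ?thesis .
qed

lemma varrho_dyadic_sum_le_thick:
  fixes \<epsilon> r :: real
  assumes "0 < \<epsilon>" "\<epsilon> \<le> r" "r < 1/5"
  shows "16 * varrho r * (\<Sum>k. (min (\<epsilon>/2^k) r)\<^sup>2) \<le> 171 / (- ln \<epsilon>) + 64 * \<epsilon>"
proof -
  define L where "L = - ln r"
  have r: "0 < r" using assms by simp
  have L: "4/3 \<le> L" "1/4 \<le> ln L"
    unfolding L_def using four_thirds_le_minus_ln[OF r assms(3)] quarter_le_ln_minus_ln[OF r assms(3)] .
  have L\<epsilon>: "4/3 \<le> - ln \<epsilon>" using assms by (intro four_thirds_le_minus_ln) auto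
  have "16 * varrho r * (\<Sum>k. (min (\<epsilon>/2^k) r)\<^sup>2) \<le> 16 * varrho r * (4/3 * \<epsilon>\<^sup>2)"
    using varrho_pos[OF r assms(3)] suminf_min_dyadic_sq_le[of \<epsilon> r] assms by simp
  also have "\<dots> = 64/3 * (\<epsilon>\<^sup>2 / r\<^sup>2) / (L * ln L)"
    using r by (simp add: varrho_eq[OF r assms(3)] L_def)
  also have "\<dots> \<le> 171 / (- ln \<epsilon>) + 64 * \<epsilon>"
  \<comment> \<open>If r^2 \<le> eps then L \<ge> |ln eps|/2; otherwise eps^2/r^2 < eps.\<close>
  proof (cases "r\<^sup>2 \<le> \<epsilon>")
    case True
    then have "ln (r\<^sup>2) \<le> ln \<epsilon>"
      using r assms(1) by (subst ln_le_cancel_iff) auto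
    then have "2 * ln r \<le> ln \<epsilon>"
      using r by (simp add: ln_realpow)
    then have L_ge: "- ln \<epsilon> / 2 \<le> L" by (simp add: L_def)
    have "\<epsilon>\<^sup>2 / r\<^sup>2 \<le> 1" using assms by (simp add: power_mono)
    then have "64/3 * (\<epsilon>\<^sup>2 / r\<^sup>2) / (L * ln L) \<le> 64/3 * 1 / ((- ln \<epsilon> / 2) * (1/4))"
      using L_ge L L\<epsilon> by (intro divide_mono mult_mono mult_left_mono) auto
    also have "\<dots> \<le> 171 / (- ln \<epsilon>)" using L\<epsilon> by (simp add: field_simps)
    finally show ?thesis using assms(1) by linarith
  next
    case False
    then have "\<epsilon>\<^sup>2 / r\<^sup>2 \<le> \<epsilon>" using assms r by (simp add: field_simps power2_eq_square)
    then have "64/3 * (\<epsilon>\<^sup>2 / r\<^sup>2) / (L * ln L) \<le> 64/3 * \<epsilon> / ((4/3) * (1/4))"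
      using L by (intro divide_mono mult_mono mult_left_mono) auto
    also have "\<dots> = 64 * \<epsilon>" by simp
    finally show ?thesis
      using divide_nonneg_pos[of 171 "- ln \<epsilon>"] L\<epsilon> by linarith
  qed
  finally show ?thesis .
qed

definition kato_majorant :: "real \<Rightarrow> real" where
  "kato_majorant \<epsilon> = 56 / ln (- ln \<epsilon>) + 171 / (- ln \<epsilon>) + 64 * \<epsilon>"

lemma kato_majorant_tendsto_0: "(kato_majorant \<longlongrightarrow> 0) (at_right 0)"
  unfolding kato_majorant_def by real_asymp

lemma nn_integral_U_le_kato_majorant:
  fixes x :: "real^3"
  assumes "0 < r" "r < 1/5" "0 < \<epsilon>" "\<epsilon> < 1/5"
  shows "(\<integral>\<^sup>+ z. ennreal (indicator (ball x \<epsilon>) z * \<bar>U r z\<bar> / norm (z - x)) \<partial>lborel)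
    \<le> ennreal (kato_majorant \<epsilon>)"
proof -
  have "\<bar>U r z\<bar> = varrho r * indicator (cyl r) z" for z
    using varrho_pos[OF assms(1,2)] by (simp add: U_def)
  then have "(\<integral>\<^sup>+ z. ennreal (indicator (ball x \<epsilon>) z * \<bar>U r z\<bar> / norm (z - x)) \<partial>lborel)
      \<le> ennreal (16 * varrho r * (\<Sum>k. (min (\<epsilon>/2^k) r)\<^sup>2))"
    using nn_integral_ball_cyl_le[of "varrho r" r \<epsilon> x] varrho_pos[OF assms(1,2)] assms by simp
  also have "\<dots> \<le> ennreal (kato_majorant \<epsilon>)"
  proof (rule ennreal_leI)
    have "0 < - ln \<epsilon>" "0 < ln (- ln \<epsilon>)"
      using four_thirds_le_minus_ln[OF assms(3,4)] quarter_le_ln_minus_ln[OF assms(3,4)] by auto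
    then have nonneg: "0 \<le> 56 / ln (- ln \<epsilon>)" "0 \<le> 171 / (- ln \<epsilon>)" "0 \<le> 64 * \<epsilon>"
      using assms by auto
    show "16 * varrho r * (\<Sum>k. (min (\<epsilon>/2^k) r)\<^sup>2) \<le> kato_majorant \<epsilon>"
    proof (cases "r < \<epsilon>")
      case True
      then show ?thesis
        using varrho_dyadic_sum_le_thin[OF assms(1) True assms(4)] nonneg
        unfolding kato_majorant_def by linarith
    next
      case False
      then show ?thesis
        using varrho_dyadic_sum_le_thick[OF assms(3) _ assms(2)] nonneg
        unfolding kato_majorant_def by linarith
    qed
  qed
  finally show ?thesis .
qed

theorem lemma4p1:
  shows "((\<lambda>\<epsilon>::real. SUP p \<in> UNIV \<times> {0<..<1/5}.
            (\<integral>\<^sup>+ z. ennreal (indicator (ball (fst p) \<epsilon>) z * \<bar>U (snd p) z\<bar> / norm (z - fst p)) \<partial>lborel))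
         \<longlongrightarrow> 0) (at_right 0)"
proof (rule tendsto_sandwich[where f = "\<lambda>_. 0" and h = "\<lambda>\<epsilon>. ennreal (kato_majorant \<epsilon>)"])
  have "\<forall>\<^sub>F \<epsilon> in at_right 0. \<epsilon> \<in> {0<..<1/5::real}"
    by (rule eventually_at_right_real) simp
  then show "\<forall>\<^sub>F \<epsilon> in at_right 0. (SUP p \<in> UNIV \<times> {0<..<1/5}.
      (\<integral>\<^sup>+ z. ennreal (indicator (ball (fst p) \<epsilon>) z * \<bar>U (snd p) z\<bar> / norm (z - fst p)) \<partial>lborel))
    \<le> ennreal (kato_majorant \<epsilon>)"
    by (rule eventually_mono) (auto intro!: SUP_least nn_integral_U_le_kato_majorant)
  show "((\<lambda>\<epsilon>. ennreal (kato_majorant \<epsilon>)) \<longlongrightarrow> 0) (at_right 0)"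
    using tendsto_ennrealI[OF kato_majorant_tendsto_0] by simp
qed simp_all

end
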